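(* Let $v_0$ be $C^4$ on $\mathbb{R}$ with bounded derivatives up to order $4$ and $v_0(x)\to0$ as $|x|\to\infty$; let $c$ be continuous and bounded on $[0,\infty)\times\mathbb{R}$, $C^1$ on $]0,\infty)\times\mathbb{R}$, with space derivatives up to order $4$ continuous and bounded on $]0,\infty)\times\mathbb{R}$. Fix $t>0$, and for each integer $n\ge1$ let $v_n^{(t)}$ be the function on $[0,t]\times\mathbb{R}$ constructed by: $\tau_k=\frac{kt}{2n}$, $v_n^{(t)}(0,\cdot)=v_0$, and for $k=0,\dots,n-1$, $$v_n^{(t)}(\tau,x)=\big(U_{2(\tau-\tau_{2k})}v_n^{(t)}(\tau_{2k},\cdot)\big)(x)\ (\tau\in[\tau_{2k},\tau_{2k+1}]),\qquad v_n^{(t)}(\tau,x)=e^{-2c(\tau_{2k+2},x)(\tau-\tau_{2k+1})}v_n^{(t)}(\tau_{2k+1},x)\ (\tau\in[\tau_{2k+1},\tau_{2k+2}]),$$ with $U_0=\mathrm{id}$ and $(U_sf)(x)=\int_{\mathbb{R}}(2\pi\,\mathrm{sh}(2s))^{-1/2}\exp\big(-\frac12\big((x^2+z^2)\frac{\mathrm{ch}(2s)}{\mathrm{sh}(2s)}-\frac{2xz}{\mathrm{sh}(2s)}\big)\big)f(z)\,dz$ for $s>0$. Then for each $x\in\mathbb{R}$ there exists $C>0$, depending on $t$ and $x$, such that for all $j\in\{0,\dots,4\}$, all $n\in\mathbb{N}^*$, all $k\in\{0,\dots,n-1\}$ and all $\tau\in\big[\frac{kt}{n},\frac{(k+1)t}{n}\big]$,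 $$\Big|\frac{\partial^jv_n^{(t)}}{\partial x^j}(\tau,x)\Big|\le C.$$
   Context: $\mathrm{ch},\mathrm{sh}$ are hyperbolic cosine and sine. *)

theory Defs
  imports "HOL-Analysis.Analysis"
begin

definition Ukernel :: "real \<Rightarrow> real \<Rightarrow> real \<Rightarrow> real" where
  "Ukernel s x z = (2 * pi * sinh (2 * s)) powr (-1/2) *
     exp (-(1/2) * ((x^2 + z^2) * cosh (2 * s) / sinh (2 * s) - 2 * x * z / sinh (2 * s)))"

definition Uop :: "real \<Rightarrow> (real \<Rightarrow> real) \<Rightarrow> real \<Rightarrow> real" where
  "Uop s f x = (if s = 0 then f x else (\<integral>z. Ukernel s x z * f z \<partial>lborel))"

definition gtau :: "real \<Rightarrow> nat \<Rightarrow> nat \<Rightarrow> real" where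
  "gtau t n j = real j * t / (2 * real n)"

text \<open>node t n c v0 k = v_n^(t)(tau_{2k}, .)\<close>
fun node :: "real \<Rightarrow> nat \<Rightarrow> (real \<Rightarrow> real \<Rightarrow> real) \<Rightarrow> (real \<Rightarrow> real) \<Rightarrow> nat \<Rightarrow> real \<Rightarrow> real" where
  "node t n c v0 0 = v0"
| "node t n c v0 (Suc k) = (\<lambda>x.
     exp (- 2 * c (gtau t n (2*k+2)) x * (gtau t n (2*k+2) - gtau t n (2*k+1))) *
     Uop (2 * (gtau t n (2*k+1) - gtau t n (2*k))) (node t n c v0 k) x)"

text \<open>The function v_n^(t)(tau, x) for tau in [0,t]. The index m selects the subinterval
  [tau_m, tau_{m+1}] (clamped to m \<le> 2n-1); even m = 2k: diffusion step, odd m = 2k+1: potential step.\<close>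
definition vn :: "real \<Rightarrow> nat \<Rightarrow> (real \<Rightarrow> real \<Rightarrow> real) \<Rightarrow> (real \<Rightarrow> real) \<Rightarrow> real \<Rightarrow> real \<Rightarrow> real" where
  "vn t n c v0 \<tau> x =
    (let m = min (2*n - 1) (nat \<lfloor>\<tau> / (t / (2 * real n))\<rfloor>); k = m div 2 in
     if even m then Uop (2 * (\<tau> - gtau t n (2*k))) (node t n c v0 k) x
     else exp (- 2 * c (gtau t n (2*k+2)) x * (\<tau> - gtau t n (2*k+1))) *
          Uop (2 * (gtau t n (2*k+1) - gtau t n (2*k))) (node t n c v0 k) x)"

end

theory Submission
  imports Defs "HOL-Probability.Distributions"
begin

text \<open>For every function produced by the scheme we keep track of its first \<open>N\<close> derivatives
  \<open>D 0, \<dots>, D N\<close> together with a bound \<open>\<bar>D j x\<bar> \<le> B cosh (j x)\<close>. After the substitution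
  \<open>z = x / ch(2s) + sqrt (th(2s)) u\<close> the diffusion step \<open>U\<^sub>s\<close> becomes a Gaussian average of \<open>f\<close>
  multiplied by \<open>ch(2s)\<^sup>-\<^sup>1\<^sup>/\<^sup>2 exp (- th(2s) x\<^sup>2 / 2)\<close>; differentiating under the integral and
  applying Leibniz's rule multiplies \<open>B\<close> by \<open>exp (O (th(2s))) = exp (O(s))\<close>. The potential step
  multiplies by \<open>exp (- 2 c h)\<close>, whose derivatives are \<open>O(h)\<close>, and so multiplies \<open>B\<close> by
  \<open>exp (O(h))\<close>. Over the \<open>n\<close> steps of length \<open>t / n\<close> the bound grows by a factor \<open>exp (O(t))\<close>
  independent of \<open>n\<close>, and at a fixed \<open>x\<close> the weight \<open>cosh (4 x)\<close> is a constant.\<close>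

lemma cosh_add_le: "cosh (a + b :: real) \<le> cosh a * exp \<bar>b\<bar>"
proof -
  have "exp (a + b) \<le> exp a * exp \<bar>b\<bar>" "exp (- (a + b)) \<le> exp (- a) * exp \<bar>b\<bar>"
    by (simp_all flip: exp_add)
  then show ?thesis
    unfolding cosh_def by (simp add: field_simps)
qed

lemma cosh_le_exp_abs: "cosh (y :: real) \<le> exp \<bar>y\<bar>"
  unfolding cosh_def by (cases "y \<ge> 0") auto

lemma exp_abs_le_cosh: "exp \<bar>y :: real\<bar> \<le> 2 * cosh y"
  unfolding cosh_def by (cases "y \<ge> 0") auto

lemma cosh_le_cosh_of_abs_le: "\<bar>a\<bar> \<le> \<bar>b\<bar> \<Longrightarrow> cosh (a :: real) \<le> cosh b"
  by (metis cosh_real_abs cosh_real_nonneg_le_iff abs_ge_zero)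

lemma tanh_le_two_mult:
  assumes y: "0 \<le> y"
  shows "tanh (y :: real) \<le> 2 * y"
proof -
  have "tanh y = (1 - exp (- 2 * y)) / (1 + exp (- 2 * y))"
    by (rule tanh_real_altdef)
  also have "\<dots> \<le> (1 - exp (- 2 * y)) / 1"
    using y by (intro divide_left_mono) (auto simp: add_pos_pos)
  also have "\<dots> \<le> 2 * y"
    using exp_ge_add_one_self[of "- 2 * y"] by simp
  finally show ?thesis .
qed

lemma powr_minus_half: "y > 0 \<Longrightarrow> y powr (-1/2) = 1 / sqrt y"
  by (simp add: powr_minus_divide powr_half_sqrt flip: minus_divide_left)

lemma abs_diff_le_cosh_bounded_deriv:
  assumes der: "\<And>y. (h has_real_derivative h' y) (at y)"
    and bound: "\<And>y. \<bar>h' y\<bar> \<le> B * cosh (K * y)" and K: "K \<ge> 0"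
  shows "\<bar>h (y + d) - h y\<bar> \<le> \<bar>d\<bar> * (B * cosh (K * y) * exp (K * \<bar>d\<bar>))"
proof -
  have B: "0 \<le> B"
    using bound[of 0] by simp
  have h'_le: "\<bar>h' z\<bar> \<le> B * cosh (K * y) * exp (K * \<bar>d\<bar>)" if "\<bar>z - y\<bar> \<le> \<bar>d\<bar>" for z
  proof -
    have "cosh (K * z) \<le> cosh (K * y) * exp \<bar>K * (z - y)\<bar>"
      using cosh_add_le[of "K * y" "K * (z - y)"] by (simp add: algebra_simps)
    also have "\<dots> \<le> cosh (K * y) * exp (K * \<bar>d\<bar>)"
      using that K by (auto simp: abs_mult intro!: mult_left_mono)
    finally show ?thesis
      using bound[of z] B by (smt (verit) mult_left_mono mult.assoc)
  qed
  obtain z where "\<bar>z - y\<bar> \<le> \<bar>d\<bar>" "h (y + d) - h y = d * h' z"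
  proof (cases d "0::real" rule: linorder_cases)
    case less
    with MVT2[of "y + d" y h h'] der that show ?thesis
      by (smt (verit, ccfv_threshold) mult_minus_left)
  next
    case greater
    with MVT2[of y "y + d" h h'] der that show ?thesis
      by (smt (verit, ccfv_threshold))
  qed (use that in auto)
  then show ?thesis
    using h'_le by (auto simp: abs_mult intro!: mult_left_mono)
qed

section \<open>Gaussian integrals\<close>

lemma std_normal_density_mult_exp:
  "std_normal_density u * exp (b * u) = exp (b\<^sup>2 / 2) * normal_density b 1 u"
proof -
  have "exp (b * u) * exp (- (u\<^sup>2 / 2)) = exp (b\<^sup>2 / 2) * exp (- ((u - b)\<^sup>2 / 2))"
    unfolding mult_exp_exp by (rule arg_cong[where f = exp]) (simp add: power2_eq_square field_simps)
  then show ?thesis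
    unfolding normal_density_def by (simp add: mult_ac)
qed

lemma std_normal_density_mult_cosh:
  "std_normal_density u * cosh (c + q * u) =
     exp c / 2 * (std_normal_density u * exp (q * u)) +
     exp (- c) / 2 * (std_normal_density u * exp ((- q) * u))"
  unfolding cosh_def by (simp add: exp_add [symmetric] exp_diff field_simps)

lemma integrable_std_normal_cosh:
  "integrable lborel (\<lambda>u. std_normal_density u * cosh (c + q * u))"
  unfolding std_normal_density_mult_cosh std_normal_density_mult_exp by simp

lemma integral_std_normal_cosh:
  "(\<integral>u. std_normal_density u * cosh (c + q * u) \<partial>lborel) = cosh c * exp (q\<^sup>2 / 2)"
  unfolding std_normal_density_mult_cosh std_normal_density_mult_exp
  by (simp add: cosh_def field_simps)

lemma abs_std_normal_mult_le:
  assumes "\<And>y. \<bar>f y\<bar> \<le> B * cosh (K * y)"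
  shows "\<bar>std_normal_density u * f y\<bar> \<le> B * (std_normal_density u * cosh (K * y))"
proof -
  have "\<bar>std_normal_density u * f y\<bar> = std_normal_density u * \<bar>f y\<bar>"
    by (simp add: abs_mult normal_density_nonneg)
  also have "\<dots> \<le> std_normal_density u * (B * cosh (K * y))"
    using assms by (intro mult_left_mono) (auto simp: normal_density_nonneg)
  finally show ?thesis by (simp add: mult_ac)
qed

lemma integrable_std_normal_cosh_affine:
  "integrable lborel (\<lambda>u. B * (std_normal_density u * cosh (K * (c + q * u))))"
  using integrable_std_normal_cosh[of "K * c" "K * q"] by (simp add: distrib_left mult.assoc)

lemma integrable_std_normal_comp:
  assumes f: "f \<in> borel_measurable borel" and bound: "\<And>y. \<bar>f y\<bar> \<le> B * cosh (K * y)"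
  shows "integrable lborel (\<lambda>u. std_normal_density u * f (c + q * u))"
proof (rule Bochner_Integration.integrable_bound[OF integrable_std_normal_cosh_affine])
  show "(\<lambda>u. std_normal_density u * f (c + q * u)) \<in> borel_measurable lborel"
    using f by measurable
  have "0 \<le> B"
    using bound[of 0] by simp
  then show "AE u in lborel. norm (std_normal_density u * f (c + q * u))
      \<le> norm (B * (std_normal_density u * cosh (K * (c + q * u))))"
    using abs_std_normal_mult_le[OF bound] by (simp add: abs_mult normal_density_nonneg)
qed

lemma abs_integral_std_normal_comp_le:
  assumes f: "f \<in> borel_measurable borel" and bound: "\<And>y. \<bar>f y\<bar> \<le> B * cosh (K * y)"
  shows "\<bar>\<integral>u. std_normal_density u * f (c + q * u) \<partial>lborel\<bar> \<le> B * (cosh (K * c) * exp ((K * q)\<^sup>2 / 2))"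
proof -
  have "\<bar>\<integral>u. std_normal_density u * f (c + q * u) \<partial>lborel\<bar>
      \<le> (\<integral>u. B * (std_normal_density u * cosh (K * (c + q * u))) \<partial>lborel)"
    using abs_std_normal_mult_le[OF bound]
    by (intro integral_abs_bound_integral integrable_std_normal_comp[OF f bound]
        integrable_std_normal_cosh_affine)
  also have "\<dots> = B * (cosh (K * c) * exp ((K * q)\<^sup>2 / 2))"
    using integral_std_normal_cosh[of "K * c" "K * q"] by (simp add: distrib_left mult.assoc)
  finally show ?thesis .
qed

section \<open>Differentiation under the Gaussian integral\<close>

definition gauss_smooth :: "real \<Rightarrow> real \<Rightarrow> (real \<Rightarrow> real) \<Rightarrow> real \<Rightarrow> real" where
  "gauss_smooth p q f x = (\<integral>u. std_normal_density u * f (p * x + q * u) \<partial>lborel)"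

lemma gauss_smooth_measurable:
  assumes [measurable]: "f \<in> borel_measurable borel"
  shows "gauss_smooth p q f \<in> borel_measurable borel"
  unfolding gauss_smooth_def[abs_def] by measurable

lemma abs_std_normal_diff_quotient_le:
  assumes der: "\<And>y. (h has_real_derivative h' y) (at y)"
    and bound: "\<And>y. \<bar>h' y\<bar> \<le> B * cosh (K * y)" and K: "K \<ge> 0"
    and X: "X \<noteq> 0" "\<bar>X\<bar> \<le> H"
  shows "\<bar>std_normal_density u * ((h (y + p * X) - h y) / X)\<bar>
    \<le> \<bar>p\<bar> * B * exp (K * \<bar>p\<bar> * H) * (std_normal_density u * cosh (K * y))"
proof -
  have B: "0 \<le> B"
    using bound[of 0] by simp
  have "\<bar>h (y + p * X) - h y\<bar> \<le> \<bar>p * X\<bar> * (B * cosh (K * y) * exp (K * \<bar>p * X\<bar>))"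
    by (rule abs_diff_le_cosh_bounded_deriv[OF der bound K])
  also have "\<dots> \<le> \<bar>p * X\<bar> * (B * cosh (K * y) * exp (K * \<bar>p\<bar> * H))"
  proof -
    have "K * \<bar>p * X\<bar> \<le> K * \<bar>p\<bar> * H"
      using X K by (simp add: abs_mult mult.assoc mult_left_mono)
    then show ?thesis
      using B by (intro mult_left_mono) auto
  qed
  finally have "\<bar>(h (y + p * X) - h y) / X\<bar> \<le> \<bar>p\<bar> * (B * cosh (K * y) * exp (K * \<bar>p\<bar> * H))"
    using X by (simp add: abs_mult divide_le_eq mult_ac)
  then have "std_normal_density u * \<bar>(h (y + p * X) - h y) / X\<bar>
      \<le> std_normal_density u * (\<bar>p\<bar> * (B * cosh (K * y) * exp (K * \<bar>p\<bar> * H)))"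
    by (rule mult_left_mono) (simp add: normal_density_nonneg)
  then show ?thesis
    by (simp add: abs_mult normal_density_nonneg mult_ac)
qed

lemma gauss_smooth_diff_quotient:
  assumes [measurable]: "h \<in> borel_measurable borel" and h_bound: "\<And>y. \<bar>h y\<bar> \<le> B * cosh (K * y)"
  shows "(gauss_smooth p q h (x + d) - gauss_smooth p q h x) / d =
    (\<integral>u. std_normal_density u * ((h (p * x + q * u + p * d) - h (p * x + q * u)) / d) \<partial>lborel)"
proof -
  have "gauss_smooth p q h (x + d) - gauss_smooth p q h x
      = (\<integral>u. std_normal_density u * (h (p * x + q * u + p * d) - h (p * x + q * u)) \<partial>lborel)"
    unfolding gauss_smooth_def
    using integrable_std_normal_comp[OF _ h_bound, of "p * x + p * d" q]
      integrable_std_normal_comp[OF _ h_bound, of "p * x" q]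
    by (simp flip: Bochner_Integration.integral_diff add: algebra_simps)
  then show ?thesis
    by simp
qed

lemma diff_quotient_affine_LIMSEQ:
  assumes der: "(h has_real_derivative D) (at y)" and X: "\<forall>i. X i \<noteq> 0" "X \<longlonglongrightarrow> 0"
  shows "(\<lambda>i. (h (y + p * X i) - h y) / X i) \<longlonglongrightarrow> D * p"
proof -
  have "((\<lambda>d. y + p * d) has_real_derivative p) (at 0)"
    by (auto intro!: derivative_eq_intros)
  from DERIV_chain2[OF _ this, of h] der
  have "((\<lambda>d. h (y + p * d)) has_real_derivative D * p) (at 0)"
    by simp
  then have "((\<lambda>d. (h (y + p * d) - h y) / d) \<longlongrightarrow> D * p) (at 0)"
    unfolding DERIV_def by simp
  then show ?thesis
    using X unfolding tendsto_at_iff_sequentially comp_def by blast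
qed

lemma has_real_derivative_gauss_smooth:
  assumes der: "\<And>y. (h has_real_derivative h' y) (at y)"
    and h'_meas [measurable]: "h' \<in> borel_measurable borel"
    and h'_bound: "\<And>y. \<bar>h' y\<bar> \<le> B * cosh (K * y)" and K: "K \<ge> 0"
    and h_bound: "\<And>y. \<bar>h y\<bar> \<le> B0 * cosh (K0 * y)"
  shows "(gauss_smooth p q h has_real_derivative p * gauss_smooth p q h' x) (at x)"
proof -
  have [measurable]: "h \<in> borel_measurable borel"
    using der by (intro borel_measurable_continuous_onI) (meson DERIV_isCont continuous_at_imp_continuous_on)
  have "((\<lambda>d. (gauss_smooth p q h (x + d) - gauss_smooth p q h x) / d)
      \<longlongrightarrow> p * gauss_smooth p q h' x) (at 0)"
    unfolding tendsto_at_iff_sequentially comp_def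
  proof (intro allI impI)
    fix X :: "nat \<Rightarrow> real"
    assume X0: "\<forall>i. X i \<in> UNIV - {0}" and X_lim: "X \<longlonglongrightarrow> 0"
    obtain H where H: "\<And>i. norm (X i) \<le> H"
      using convergent_imp_Bseq[OF convergentI[OF X_lim]] unfolding Bseq_def by auto
    define s where "s i u = std_normal_density u * ((h (p * x + q * u + p * X i) - h (p * x + q * u)) / X i)" for i u
    have quotient: "(gauss_smooth p q h (x + X i) - gauss_smooth p q h x) / X i = integral\<^sup>L lborel (s i)" for i
      unfolding s_def by (rule gauss_smooth_diff_quotient[OF _ h_bound]) measurable
    have "(\<lambda>i. integral\<^sup>L lborel (s i)) \<longlonglongrightarrow>
        (\<integral>u. std_normal_density u * (h' (p * x + q * u) * p) \<partial>lborel)"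
    proof (rule integral_dominated_convergence
        [where w = "\<lambda>u. \<bar>p\<bar> * B * exp (K * \<bar>p\<bar> * H) * (std_normal_density u * cosh (K * (p * x + q * u)))"])
      show "integrable lborel
          (\<lambda>u. \<bar>p\<bar> * B * exp (K * \<bar>p\<bar> * H) * (std_normal_density u * cosh (K * (p * x + q * u))))"
        using integrable_std_normal_cosh_affine[of "\<bar>p\<bar> * B * exp (K * \<bar>p\<bar> * H)"] by (simp add: mult.assoc)
      show "AE u in lborel. norm (s i u)
          \<le> \<bar>p\<bar> * B * exp (K * \<bar>p\<bar> * H) * (std_normal_density u * cosh (K * (p * x + q * u)))" for i
        using abs_std_normal_diff_quotient_le[OF der h'_bound K, of "X i" H] X0 H unfolding s_def by auto
      show "AE u in lborel. (\<lambda>i. s i u) \<longlonglongrightarrow> std_normal_density u * (h' (p * x + q * u) * p)"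
      proof (rule AE_I2)
        fix u
        have "(\<lambda>i. (h (p * x + q * u + p * X i) - h (p * x + q * u)) / X i) \<longlonglongrightarrow> h' (p * x + q * u) * p"
          using diff_quotient_affine_LIMSEQ[OF der] X0 X_lim by simp
        then show "(\<lambda>i. s i u) \<longlonglongrightarrow> std_normal_density u * (h' (p * x + q * u) * p)"
          unfolding s_def by (intro tendsto_mult_left)
      qed
    qed (simp_all add: s_def[abs_def])
    then show "(\<lambda>i. (gauss_smooth p q h (x + X i) - gauss_smooth p q h x) / X i)
        \<longlonglongrightarrow> p * gauss_smooth p q h' x"
      unfolding quotient by (simp add: gauss_smooth_def mult_ac)
  qed
  then show ?thesis
    unfolding DERIV_def by simp
qed

text \<open>The top derivative is only required to be measurable: it is integrated against the
  Gaussian but never differentiated.\<close>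
definition deriv_chain :: "nat \<Rightarrow> (nat \<Rightarrow> real \<Rightarrow> real) \<Rightarrow> bool" where
  "deriv_chain N D \<longleftrightarrow>
     (\<forall>j<N. \<forall>x. (D j has_real_derivative D (Suc j) x) (at x)) \<and> D N \<in> borel_measurable borel"

lemma deriv_chainD:
  "deriv_chain N D \<Longrightarrow> j < N \<Longrightarrow> (D j has_real_derivative D (Suc j) x) (at x)"
  unfolding deriv_chain_def by blast

lemma deriv_chain_continuous_on:
  "deriv_chain N D \<Longrightarrow> j < N \<Longrightarrow> continuous_on UNIV (D j)"
  by (meson DERIV_isCont continuous_at_imp_continuous_on deriv_chainD)

lemma deriv_chain_measurable:
  assumes "deriv_chain N D" "j \<le> N"
  shows "D j \<in> borel_measurable borel"
proof (cases "j = N")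
  case False
  then show ?thesis
    using assms deriv_chain_continuous_on[OF assms(1), of j] by (simp add: borel_measurable_continuous_onI)
qed (use assms in \<open>simp add: deriv_chain_def\<close>)

lemma funpow_deriv_eq_deriv_chain:
  assumes "deriv_chain N D"
  shows "j \<le> N \<Longrightarrow> (deriv ^^ j) (D 0) = D j"
proof (induction j)
  case (Suc j)
  then show ?case
    using deriv_chainD[OF assms, of j] by (auto intro!: ext DERIV_imp_deriv)
qed simp

lemma deriv_chain_funpow_deriv:
  assumes "\<And>j x. j < N \<Longrightarrow> (deriv ^^ j) f differentiable (at x)"
    and "(deriv ^^ N) f \<in> borel_measurable borel"
  shows "deriv_chain N (\<lambda>j. (deriv ^^ j) f)"
  using assms by (simp add: deriv_chain_def DERIV_deriv_iff_real_differentiable)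

lemma deriv_chain_scaleR:
  "deriv_chain N D \<Longrightarrow> deriv_chain N (\<lambda>j x. r * D j x)"
  unfolding deriv_chain_def by (auto intro: DERIV_cmult)

definition leibniz :: "(nat \<Rightarrow> real \<Rightarrow> real) \<Rightarrow> (nat \<Rightarrow> real \<Rightarrow> real) \<Rightarrow> nat \<Rightarrow> real \<Rightarrow> real" where
  "leibniz a b j x = (\<Sum>i\<le>j. real (j choose i) * a i x * b (j - i) x)"

lemma leibniz_0 [simp]: "leibniz a b 0 x = a 0 x * b 0 x"
  by (simp add: leibniz_def)

lemma leibniz_Suc:
  "leibniz a b (Suc j) x =
     (\<Sum>i\<le>j. real (j choose i) * (a (Suc i) x * b (j - i) x + a i x * b (Suc (j - i)) x))"
proof -
  define f where "f i = a i x * b (Suc j - i) x" for i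
  have "leibniz a b (Suc j) x = f 0 + (\<Sum>i\<le>j. real (Suc j choose Suc i) * f (Suc i))"
    unfolding leibniz_def f_def by (subst sum.atMost_Suc_shift) (simp add: mult.assoc)
  also have "\<dots> = (\<Sum>i\<le>j. real (j choose i) * f (Suc i)) + (f 0 + (\<Sum>i\<le>j. real (j choose Suc i) * f (Suc i)))"
    by (simp add: sum.distrib distrib_right)
  also have "f 0 + (\<Sum>i\<le>j. real (j choose Suc i) * f (Suc i)) = (\<Sum>i\<le>Suc j. real (j choose i) * f i)"
    by (subst sum.atMost_Suc_shift) simp
  also have "\<dots> = (\<Sum>i\<le>j. real (j choose i) * f i)"
    by simp
  finally show ?thesis
    unfolding f_def by (simp add: Suc_diff_le sum.distrib distrib_left mult.assoc)
qed

lemma has_real_derivative_leibniz: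
  assumes "\<And>i x. i \<le> j \<Longrightarrow> (a i has_real_derivative a (Suc i) x) (at x)"
    and "\<And>i x. i \<le> j \<Longrightarrow> (b i has_real_derivative b (Suc i) x) (at x)"
  shows "(leibniz a b j has_real_derivative leibniz a b (Suc j) x) (at x)"
proof -
  have "(leibniz a b j has_real_derivative
      (\<Sum>i\<le>j. real (j choose i) * (a (Suc i) x * b (j - i) x + a i x * b (Suc (j - i)) x))) (at x)"
    unfolding leibniz_def[abs_def]
    by (rule derivative_eq_intros refl assms | simp)+ (simp add: Suc_diff_le algebra_simps)
  then show ?thesis
    by (simp only: leibniz_Suc)
qed

lemma deriv_chain_leibniz:
  assumes a: "deriv_chain N a" and b: "deriv_chain N b"
  shows "deriv_chain N (leibniz a b)"
  unfolding deriv_chain_def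
proof (intro conjI allI impI)
  fix j x assume "j < N"
  then show "(leibniz a b j has_real_derivative leibniz a b (Suc j) x) (at x)"
    using deriv_chainD[OF a] deriv_chainD[OF b] by (intro has_real_derivative_leibniz) auto
next
  show "leibniz a b N \<in> borel_measurable borel"
    unfolding leibniz_def[abs_def]
    by (auto intro!: borel_measurable_sum borel_measurable_times
        deriv_chain_measurable[OF a] deriv_chain_measurable[OF b])
qed

lemma abs_mult_exp_cosh_le:
  fixes y z x :: real
  assumes y: "\<bar>y\<bar> \<le> \<gamma> * exp (real i * \<bar>x\<bar>)" and z: "\<bar>z\<bar> \<le> \<beta> * cosh (real m * x)"
    and "0 \<le> \<gamma>" "0 \<le> \<beta>"
  shows "\<bar>y * z\<bar> \<le> 2 * \<gamma> * \<beta> * cosh (real (i + m) * x)"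
proof -
  have "\<bar>real (i + m) * x\<bar> = real i * \<bar>x\<bar> + real m * \<bar>x\<bar>"
    by (simp only: abs_mult abs_of_nat) (simp add: distrib_right)
  then have exp_sum: "exp (real i * \<bar>x\<bar>) * exp (real m * \<bar>x\<bar>) = exp \<bar>real (i + m) * x\<bar>"
    by (simp add: exp_add)
  have "\<beta> * cosh (real m * x) \<le> \<beta> * exp (real m * \<bar>x\<bar>)"
    using assms cosh_le_exp_abs[of "real m * x"] by (intro mult_left_mono) (auto simp: abs_mult)
  then have "\<bar>y * z\<bar> \<le> (\<gamma> * exp (real i * \<bar>x\<bar>)) * (\<beta> * exp (real m * \<bar>x\<bar>))"
    unfolding abs_mult using assms by (intro mult_mono) auto
  also have "\<dots> = \<gamma> * \<beta> * exp \<bar>real (i + m) * x\<bar>"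
    unfolding exp_sum[symmetric] by (simp only: mult_ac)
  also have "\<dots> \<le> \<gamma> * \<beta> * (2 * cosh (real (i + m) * x))"
    using assms exp_abs_le_cosh by (intro mult_left_mono) auto
  finally show ?thesis
    by (simp add: mult_ac)
qed

lemma abs_leibniz_le:
  assumes a0: "\<bar>a 0 x\<bar> \<le> \<alpha>" and a: "\<And>i. 1 \<le> i \<Longrightarrow> i \<le> j \<Longrightarrow> \<bar>a i x\<bar> \<le> \<gamma> * exp (real i * \<bar>x\<bar>)"
    and b: "\<And>m. m \<le> j \<Longrightarrow> \<bar>b m x\<bar> \<le> \<beta> * cosh (real m * x)" and \<gamma>: "0 \<le> \<gamma>"
  shows "\<bar>leibniz a b j x\<bar> \<le> (\<alpha> + 2 ^ Suc j * \<gamma>) * \<beta> * cosh (real j * x)"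
proof -
  have \<beta>: "0 \<le> \<beta>"
    using b[of 0] by simp
  have term_le: "\<bar>real (j choose i) * a i x * b (j - i) x\<bar>
      \<le> (if i = 0 then \<alpha> * \<beta> * cosh (real j * x) else 0) + 2 * real (j choose i) * \<gamma> * \<beta> * cosh (real j * x)"
    if i: "i \<le> j" for i
  proof (cases "i = 0")
    case True
    have "\<bar>a 0 x * b j x\<bar> \<le> \<alpha> * (\<beta> * cosh (real j * x))"
      unfolding abs_mult using a0 b[of j] by (intro mult_mono) auto
    moreover have "0 \<le> \<gamma> * (\<beta> * cosh (real j * x))"
      using \<gamma> \<beta> by (simp add: less_imp_le[OF cosh_real_pos])
    ultimately show ?thesis
      using True by (simp add: mult.assoc)
  next
    case False
    have "\<bar>a i x * b (j - i) x\<bar> \<le> 2 * \<gamma> * \<beta> * cosh (real (i + (j - i)) * x)"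
      using False i \<gamma> \<beta> by (intro abs_mult_exp_cosh_le a b) auto
    then have "\<bar>a i x * b (j - i) x\<bar> \<le> \<gamma> * \<beta> * (2 * cosh (real j * x))"
      using i by (simp add: mult_ac)
    then have "real (j choose i) * \<bar>a i x * b (j - i) x\<bar> \<le> real (j choose i) * (\<gamma> * \<beta> * (2 * cosh (real j * x)))"
      by (intro mult_left_mono) auto
    then show ?thesis
      using False by (simp add: abs_mult mult_ac)
  qed
  have "\<bar>leibniz a b j x\<bar> \<le> (\<Sum>i\<le>j. \<bar>real (j choose i) * a i x * b (j - i) x\<bar>)"
    unfolding leibniz_def by (rule sum_abs)
  also have "\<dots> \<le> (\<Sum>i\<le>j. (if i = 0 then \<alpha> * \<beta> * cosh (real j * x) else 0)
      + 2 * real (j choose i) * \<gamma> * \<beta> * cosh (real j * x))"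
    by (intro sum_mono term_le) simp
  also have "\<dots> = \<alpha> * \<beta> * cosh (real j * x) + 2 * real (\<Sum>i\<le>j. j choose i) * \<gamma> * \<beta> * cosh (real j * x)"
    by (simp add: sum.distrib sum_distrib_right sum_distrib_left mult.assoc)
  also have "\<dots> = (\<alpha> + 2 ^ Suc j * \<gamma>) * \<beta> * cosh (real j * x)"
    by (simp add: choose_row_sum algebra_simps)
  finally show ?thesis .
qed

text \<open>Since \<open>(exp \<circ> u\<^sub>0)' = u\<^sub>1 \<cdot> (exp \<circ> u\<^sub>0)\<close>, the higher derivatives of \<open>exp \<circ> u\<^sub>0\<close>
  follow from Leibniz's rule.\<close>
fun exp_chain :: "(nat \<Rightarrow> real \<Rightarrow> real) \<Rightarrow> nat \<Rightarrow> real \<Rightarrow> real" where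
  "exp_chain u 0 x = exp (u 0 x)"
| "exp_chain u (Suc j) x = (\<Sum>i\<le>j. real (j choose i) * u (Suc i) x * exp_chain u (j - i) x)"

lemma exp_chain_Suc_leibniz: "exp_chain u (Suc j) = leibniz (\<lambda>i. u (Suc i)) (exp_chain u) j"
  by (simp add: leibniz_def fun_eq_iff)

lemma deriv_chain_exp_chain:
  assumes u: "deriv_chain N u"
  shows "deriv_chain N (exp_chain u)"
proof -
  have der: "(exp_chain u j has_real_derivative exp_chain u (Suc j) x) (at x)" if "j < N" for j x
    using that
  proof (induction j arbitrary: x rule: less_induct)
    case (less j)
    show ?case
    proof (cases j)
      case 0
      have "((\<lambda>x. exp (u 0 x)) has_real_derivative exp (u 0 x) * u 1 x) (at x)"
        using deriv_chainD[OF u, of 0] less.prems 0 by (auto intro!: derivative_eq_intros)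
      then show ?thesis
        using 0 by (simp add: fun_eq_iff[symmetric] mult.commute)
    next
      case (Suc j')
      have "(leibniz (\<lambda>i. u (Suc i)) (exp_chain u) j' has_real_derivative
          leibniz (\<lambda>i. u (Suc i)) (exp_chain u) (Suc j') x) (at x)"
        using deriv_chainD[OF u] less Suc by (intro has_real_derivative_leibniz) auto
      then show ?thesis
        using Suc by (simp only: exp_chain_Suc_leibniz)
    qed
  qed
  have "exp_chain u N \<in> borel_measurable borel"
  proof (cases N)
    case 0
    have "exp_chain u 0 = (\<lambda>x. exp (u 0 x))"
      by (simp add: fun_eq_iff)
    with 0 show ?thesis
      using deriv_chain_measurable[OF u, of 0] by simp
  next
    case (Suc j)
    have "exp_chain u i \<in> borel_measurable borel" if "i < N" for i
      using der that
      by (intro borel_measurable_continuous_onI) (meson DERIV_isCont continuous_at_imp_continuous_on)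
    then show ?thesis
      unfolding Suc exp_chain_Suc_leibniz leibniz_def[abs_def] using Suc
      by (auto intro!: borel_measurable_sum borel_measurable_times deriv_chain_measurable[OF u])
  qed
  with der show ?thesis
    unfolding deriv_chain_def by blast
qed

fun exp_chain_bound :: "real \<Rightarrow> nat \<Rightarrow> real" where
  "exp_chain_bound r 0 = 1"
| "exp_chain_bound r (Suc j) = r * (\<Sum>i\<le>j. real (j choose i) * exp_chain_bound r (j - i))"

lemma exp_chain_bound_nonneg: "0 \<le> r \<Longrightarrow> 0 \<le> exp_chain_bound r j"
  by (induction r j rule: exp_chain_bound.induct) (auto intro!: sum_nonneg mult_nonneg_nonneg)

lemma exp_chain_bound_mono: "0 \<le> r \<Longrightarrow> r \<le> R \<Longrightarrow> exp_chain_bound r j \<le> exp_chain_bound R j"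
proof (induction r j rule: exp_chain_bound.induct)
  case (2 r j)
  then show ?case
    by (auto intro!: mult_mono sum_mono sum_nonneg mult_nonneg_nonneg exp_chain_bound_nonneg)
qed simp

lemma abs_exp_chain_le:
  assumes M: "\<And>x. exp (u 0 x) \<le> M" and r: "0 \<le> r"
    and u: "\<And>i x. 1 \<le> i \<Longrightarrow> i \<le> j \<Longrightarrow> \<bar>u i x\<bar> \<le> r * exp \<bar>x\<bar>"
  shows "\<bar>exp_chain u j x\<bar> \<le> M * exp_chain_bound r j * exp (real j * \<bar>x\<bar>)"
  using u
proof (induction j arbitrary: x rule: less_induct)
  case (less j)
  have M0: "0 \<le> M"
    using M[of 0] by (meson exp_ge_zero order_trans)
  show ?case
  proof (cases j)
    case 0
    then show ?thesis
      using M[of x] by simp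
  next
    case (Suc j')
    have term_le: "\<bar>real (j' choose i) * u (Suc i) x * exp_chain u (j' - i) x\<bar>
        \<le> M * (r * (real (j' choose i) * exp_chain_bound r (j' - i))) * exp (real j * \<bar>x\<bar>)"
      if i: "i \<le> j'" for i
    proof -
      have "\<bar>u (Suc i) x * exp_chain u (j' - i) x\<bar>
          \<le> (r * exp \<bar>x\<bar>) * (M * exp_chain_bound r (j' - i) * exp (real (j' - i) * \<bar>x\<bar>))"
        unfolding abs_mult using less.prems less.IH[of "j' - i" x] Suc i r
        by (intro mult_mono) auto
      also have "\<dots> = M * (r * exp_chain_bound r (j' - i)) * exp (real (Suc (j' - i)) * \<bar>x\<bar>)"
        by (simp add: algebra_simps flip: exp_add)
      also have "\<dots> \<le> M * (r * exp_chain_bound r (j' - i)) * exp (real j * \<bar>x\<bar>)"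
        using Suc M0 r by (intro mult_left_mono mult_nonneg_nonneg exp_chain_bound_nonneg) (auto intro!: mult_right_mono)
      finally have "\<bar>u (Suc i) x * exp_chain u (j' - i) x\<bar>
          \<le> M * (r * exp_chain_bound r (j' - i)) * exp (real j * \<bar>x\<bar>)" .
      then have "real (j' choose i) * \<bar>u (Suc i) x * exp_chain u (j' - i) x\<bar>
          \<le> real (j' choose i) * (M * (r * exp_chain_bound r (j' - i)) * exp (real j * \<bar>x\<bar>))"
        by (rule mult_left_mono) simp
      then show ?thesis
        by (simp add: abs_mult mult_ac)
    qed
    have "\<bar>exp_chain u j x\<bar>
        \<le> (\<Sum>i\<le>j'. M * (r * (real (j' choose i) * exp_chain_bound r (j' - i))) * exp (real j * \<bar>x\<bar>))"
      unfolding Suc exp_chain.simps by (rule order_trans[OF sum_abs sum_mono]) (use term_le Suc in auto)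
    then show ?thesis
      unfolding Suc by (simp add: sum_distrib_left sum_distrib_right mult_ac)
  qed
qed

definition exp_chain_const :: "real \<Rightarrow> nat \<Rightarrow> real" where
  "exp_chain_const R N = (\<Sum>j<N. \<Sum>i\<le>j. real (j choose i) * exp_chain_bound R (j - i))"

lemma exp_chain_const_nonneg: "0 \<le> R \<Longrightarrow> 0 \<le> exp_chain_const R N"
  unfolding exp_chain_const_def by (auto intro!: sum_nonneg mult_nonneg_nonneg exp_chain_bound_nonneg)

lemma exp_chain_bound_le_const:
  assumes "0 \<le> r" "r \<le> R" "1 \<le> i" "i \<le> N"
  shows "exp_chain_bound r i \<le> r * exp_chain_const R N"
proof -
  obtain j where i: "i = Suc j" and j: "j < N"
    using assms by (cases i) auto
  have "exp_chain_bound r i \<le> r * (\<Sum>i\<le>j. real (j choose i) * exp_chain_bound R (j - i))"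
    unfolding i using assms
    by (auto intro!: mult_left_mono sum_mono exp_chain_bound_mono)
  also have "\<dots> \<le> r * exp_chain_const R N"
    unfolding exp_chain_const_def using assms j
    by (intro mult_left_mono member_le_sum) (auto intro!: sum_nonneg mult_nonneg_nonneg exp_chain_bound_nonneg)
  finally show ?thesis .
qed

lemma abs_exp_chain_le_const:
  assumes M: "\<And>x. exp (u 0 x) \<le> M" and r: "0 \<le> r" "r \<le> R"
    and u_bound: "\<And>i x. 1 \<le> i \<Longrightarrow> i \<le> N \<Longrightarrow> \<bar>u i x\<bar> \<le> r * exp \<bar>x\<bar>"
    and i: "1 \<le> i" "i \<le> N"
  shows "\<bar>exp_chain u i x\<bar> \<le> M * r * exp_chain_const R N * exp (real i * \<bar>x\<bar>)"
proof -
  have M0: "0 \<le> M"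
    using M[of 0] by (meson exp_ge_zero order_trans)
  have "\<bar>exp_chain u i x\<bar> \<le> M * exp_chain_bound r i * exp (real i * \<bar>x\<bar>)"
    using i by (intro abs_exp_chain_le[where u = u, OF M r(1)] u_bound) auto
  also have "\<dots> \<le> M * (r * exp_chain_const R N) * exp (real i * \<bar>x\<bar>)"
    using i r M0 by (intro mult_right_mono mult_left_mono exp_chain_bound_le_const) auto
  finally show ?thesis
    by (simp add: mult_ac)
qed

definition derivs_cosh_bounded :: "nat \<Rightarrow> real \<Rightarrow> (nat \<Rightarrow> real \<Rightarrow> real) \<Rightarrow> bool" where
  "derivs_cosh_bounded N B D \<longleftrightarrow> deriv_chain N D \<and> (\<forall>j\<le>N. \<forall>x. \<bar>D j x\<bar> \<le> B * cosh (real j * x))"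

lemma derivs_cosh_boundedD:
  "derivs_cosh_bounded N B D \<Longrightarrow> j \<le> N \<Longrightarrow> \<bar>D j x\<bar> \<le> B * cosh (real j * x)"
  unfolding derivs_cosh_bounded_def by blast

lemma derivs_cosh_bounded_nonneg: "derivs_cosh_bounded N B D \<Longrightarrow> 0 \<le> B"
  using derivs_cosh_boundedD[of N B D 0 0] by simp

lemma derivs_cosh_bounded_mono:
  assumes "derivs_cosh_bounded N B D" "B \<le> B'"
  shows "derivs_cosh_bounded N B' D"
  using assms order_trans[OF _ mult_right_mono[OF \<open>B \<le> B'\<close> less_imp_le[OF cosh_real_pos]]]
  unfolding derivs_cosh_bounded_def by blast

lemma derivs_cosh_bounded_scale:
  assumes "derivs_cosh_bounded N B D" "0 \<le> r" "r \<le> 1"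
  shows "derivs_cosh_bounded N B (\<lambda>j x. r * D j x)"
proof -
  have "\<bar>r * D j x\<bar> \<le> B * cosh (real j * x)" if "j \<le> N" for j x
    using assms derivs_cosh_boundedD[OF assms(1) that, of x]
    by (simp add: abs_mult) (meson abs_ge_zero mult_left_le_one_le order_trans)
  then show ?thesis
    using assms deriv_chain_scaleR unfolding derivs_cosh_bounded_def by blast
qed

lemma abs_funpow_deriv_le:
  assumes "derivs_cosh_bounded N B D" "j \<le> N"
  shows "\<bar>(deriv ^^ j) (D 0) x\<bar> \<le> B * cosh (real N * x)"
proof -
  have "\<bar>(deriv ^^ j) (D 0) x\<bar> \<le> B * cosh (real j * x)"
    using assms funpow_deriv_eq_deriv_chain[of N D j] derivs_cosh_boundedD[of N B D j x]
    unfolding derivs_cosh_bounded_def by auto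
  also have "\<dots> \<le> B * cosh (real N * x)"
    using assms derivs_cosh_bounded_nonneg[OF assms(1)]
    by (intro mult_left_mono cosh_le_cosh_of_abs_le) (auto simp: abs_mult intro!: mult_right_mono)
  finally show ?thesis .
qed

lemma derivs_cosh_bounded_exp_mult:
  assumes D: "derivs_cosh_bounded N B D" and u: "deriv_chain N u"
    and M: "\<And>x. exp (u 0 x) \<le> M" and r: "0 \<le> r" "r \<le> R"
    and u_bound: "\<And>i x. 1 \<le> i \<Longrightarrow> i \<le> N \<Longrightarrow> \<bar>u i x\<bar> \<le> r * exp \<bar>x\<bar>"
  shows "derivs_cosh_bounded N (M * exp (2 ^ Suc N * exp_chain_const R N * r) * B) (leibniz (exp_chain u) D)"
proof -
  define K where "K = exp_chain_const R N"
  have M0: "0 \<le> M"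
    using M[of 0] by (meson exp_ge_zero order_trans)
  have K0: "0 \<le> K"
    unfolding K_def using r by (simp add: exp_chain_const_nonneg)
  have B0: "0 \<le> B"
    by (rule derivs_cosh_bounded_nonneg[OF D])
  have bound: "\<bar>leibniz (exp_chain u) D j x\<bar> \<le> (M * exp (2 ^ Suc N * K * r) * B) * cosh (real j * x)"
    if j: "j \<le> N" for j x
  proof -
    have E_bound: "\<bar>exp_chain u i x\<bar> \<le> M * r * K * exp (real i * \<bar>x\<bar>)" if "1 \<le> i" "i \<le> j" for i
      unfolding K_def using that j by (intro abs_exp_chain_le_const[where u = u, OF M r u_bound]) auto
    have "\<bar>leibniz (exp_chain u) D j x\<bar> \<le> (M + 2 ^ Suc j * (M * r * K)) * B * cosh (real j * x)"
      using M[of x] E_bound derivs_cosh_boundedD[OF D] j M0 r K0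
      by (intro abs_leibniz_le) auto
    also have "\<dots> \<le> (M * exp (2 ^ Suc N * K * r)) * B * cosh (real j * x)"
    proof -
      have "(2::real) ^ Suc j \<le> 2 ^ Suc N"
        using j by (intro power_increasing) auto
      then have "2 ^ Suc j * (r * K) \<le> 2 ^ Suc N * (r * K)"
        using r K0 by (intro mult_right_mono) auto
      then have "1 + 2 ^ Suc j * (r * K) \<le> 1 + 2 ^ Suc N * K * r"
        by (simp add: mult_ac)
      also have "\<dots> \<le> exp (2 ^ Suc N * K * r)"
        by (rule exp_ge_add_one_self)
      finally have "M + 2 ^ Suc j * (M * r * K) \<le> M * exp (2 ^ Suc N * K * r)"
        using M0 mult_left_mono by (fastforce simp: algebra_simps)
      then show ?thesis
        using B0 by (intro mult_right_mono) (auto simp: less_imp_le[OF cosh_real_pos])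
    qed
    finally show ?thesis .
  qed
  show ?thesis
    unfolding derivs_cosh_bounded_def K_def[symmetric]
    using deriv_chain_leibniz[OF deriv_chain_exp_chain[OF u]] D bound
    unfolding derivs_cosh_bounded_def by blast
qed

lemma derivs_cosh_bounded_gauss_smooth:
  assumes D: "derivs_cosh_bounded N B D" and p: "0 < p" "p \<le> 1"
  shows "derivs_cosh_bounded N (exp (real N ^ 2 * q ^ 2 / 2) * B) (\<lambda>j x. p ^ j * gauss_smooth p q (D j) x)"
proof -
  have chain: "deriv_chain N D"
    using D by (simp add: derivs_cosh_bounded_def)
  have meas: "D j \<in> borel_measurable borel" if "j \<le> N" for j
    using deriv_chain_measurable[OF chain that] .
  have "((\<lambda>x. p ^ j * gauss_smooth p q (D j) x) has_real_derivative p ^ Suc j * gauss_smooth p q (D (Suc j)) x) (at x)"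
    if j: "j < N" for j x
  proof -
    have "\<bar>D (Suc j) y\<bar> \<le> B * cosh (real (Suc j) * y)" "\<bar>D j y\<bar> \<le> B * cosh (real j * y)" for y
      using derivs_cosh_boundedD[OF D, of "Suc j"] derivs_cosh_boundedD[OF D, of j] j by simp_all
    then have "(gauss_smooth p q (D j) has_real_derivative p * gauss_smooth p q (D (Suc j)) x) (at x)"
      using j by (intro has_real_derivative_gauss_smooth[OF deriv_chainD[OF chain j] meas]) auto
    from DERIV_cmult[OF this, of "p ^ j"] show ?thesis
      by (simp add: mult_ac)
  qed
  then have "deriv_chain N (\<lambda>j x. p ^ j * gauss_smooth p q (D j) x)"
    unfolding deriv_chain_def using meas[of N] by (auto intro: borel_measurable_times gauss_smooth_measurable)
  moreover have "\<bar>p ^ j * gauss_smooth p q (D j) x\<bar> \<le> exp (real N ^ 2 * q ^ 2 / 2) * B * cosh (real j * x)"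
    if j: "j \<le> N" for j x
  proof -
    have B0: "0 \<le> B"
      by (rule derivs_cosh_bounded_nonneg[OF D])
    have "\<bar>gauss_smooth p q (D j) x\<bar> \<le> B * (cosh (real j * (p * x)) * exp ((real j * q)\<^sup>2 / 2))"
      unfolding gauss_smooth_def by (rule abs_integral_std_normal_comp_le[OF meas[OF j] derivs_cosh_boundedD[OF D j]])
    also have "\<dots> \<le> B * (cosh (real j * x) * exp (real N ^ 2 * q ^ 2 / 2))"
    proof -
      have "cosh (real j * (p * x)) \<le> cosh (real j * x)"
        using p by (intro cosh_le_cosh_of_abs_le) (simp add: abs_mult mult_left_le_one_le mult_left_mono)
      moreover have "(real j * q)\<^sup>2 \<le> real N ^ 2 * q ^ 2"
        using j by (simp add: power_mult_distrib mult_right_mono power_mono)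
      ultimately show ?thesis
        using B0 by (intro mult_left_mono mult_mono) auto
    qed
    finally have "\<bar>gauss_smooth p q (D j) x\<bar> \<le> B * (cosh (real j * x) * exp (real N ^ 2 * q ^ 2 / 2))" .
    moreover have "\<bar>p ^ j\<bar> \<le> 1"
      using p by (simp add: power_le_one)
    ultimately have "\<bar>p ^ j * gauss_smooth p q (D j) x\<bar> \<le> 1 * (B * (cosh (real j * x) * exp (real N ^ 2 * q ^ 2 / 2)))"
      unfolding abs_mult by (intro mult_mono) auto
    then show ?thesis
      by (simp add: mult_ac)
  qed
  ultimately show ?thesis
    unfolding derivs_cosh_bounded_def by blast
qed

section \<open>The diffusion step\<close>

lemma mehler_exponent_eq:
  fixes C S x u :: real
  assumes S: "S > 0" and C: "C > 0" and CS: "C\<^sup>2 = S\<^sup>2 + 1"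
  shows "(x\<^sup>2 + (x / C + sqrt (S / C) * u)\<^sup>2) * C / S - 2 * x * (x / C + sqrt (S / C) * u) / S
    = S / C * x\<^sup>2 + u\<^sup>2"
proof -
  define q where "q = sqrt (S / C)"
  have q2: "q * q = S / C"
    unfolding q_def using S C by (simp flip: power2_eq_square)
  have "(x\<^sup>2 + (x / C + q * u)\<^sup>2) * C / S - 2 * x * (x / C + q * u) / S
      = (x\<^sup>2 * C + x\<^sup>2 / C + 2 * x * q * u + C * (q * q) * u\<^sup>2 - 2 * x\<^sup>2 / C - 2 * x * q * u) / S"
    using S C by (simp add: power2_eq_square field_simps)
  also have "\<dots> = (x\<^sup>2 * (C - 1 / C) + S * u\<^sup>2) / S"
    using C S unfolding q2 by (simp add: field_simps)
  also have "C - 1 / C = S\<^sup>2 / C"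
    using C CS by (simp add: field_simps power2_eq_square)
  also have "(x\<^sup>2 * (S\<^sup>2 / C) + S * u\<^sup>2) / S = S / C * x\<^sup>2 + u\<^sup>2"
    using S C by (simp add: field_simps power2_eq_square)
  finally show ?thesis
    unfolding q_def .
qed

lemma Ukernel_substitution:
  assumes s: "s > 0"
  shows "sqrt (tanh (2 * s)) * Ukernel s x (x / cosh (2 * s) + sqrt (tanh (2 * s)) * u)
       = cosh (2 * s) powr (-1/2) * exp (- (tanh (2 * s) * x\<^sup>2 / 2)) * std_normal_density u"
proof -
  define C where "C = cosh (2 * s)"
  define S where "S = sinh (2 * s)"
  have S: "S > 0"
    unfolding S_def using s by simp
  have C: "C > 0"
    unfolding C_def by (simp add: cosh_real_pos)
  have tanh: "tanh (2 * s) = S / C"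
    unfolding S_def C_def by (simp add: tanh_def)
  have exponent: "exp (- (1/2) * ((x\<^sup>2 + (x / C + sqrt (S / C) * u)\<^sup>2) * C / S - 2 * x * (x / C + sqrt (S / C) * u) / S))
      = exp (- (S / C * x\<^sup>2 / 2)) * exp (- u\<^sup>2 / 2)"
    unfolding mehler_exponent_eq[OF S C cosh_square_eq[of "2 * s", folded C_def S_def]] mult_exp_exp
    by (simp add: field_simps)
  have "(2 * pi * S) powr (-1/2) = 1 / sqrt (2 * pi * S)"
    using S by (intro powr_minus_half) simp
  then have factor: "sqrt (S / C) * (2 * pi * S) powr (-1/2) = C powr (-1/2) * (1 / sqrt (2 * pi))"
    unfolding powr_minus_half[OF C] using S C by (simp add: real_sqrt_divide real_sqrt_mult field_simps)
  have "sqrt (S / C) * Ukernel s x (x / C + sqrt (S / C) * u)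
      = (sqrt (S / C) * (2 * pi * S) powr (-1/2)) *
        exp (- (1/2) * ((x\<^sup>2 + (x / C + sqrt (S / C) * u)\<^sup>2) * C / S - 2 * x * (x / C + sqrt (S / C) * u) / S))"
    unfolding Ukernel_def C_def S_def by (simp only: mult.assoc)
  also have "\<dots> = C powr (-1/2) * exp (- (S / C * x\<^sup>2 / 2)) * std_normal_density u"
    unfolding factor exponent std_normal_density_def by (simp add: mult_ac)
  finally show ?thesis
    unfolding tanh C_def .
qed

lemma Uop_eq_gauss_smooth:
  assumes s: "s > 0"
  shows "Uop s f x = cosh (2 * s) powr (-1/2) * exp (- (tanh (2 * s) * x\<^sup>2 / 2)) *
    gauss_smooth (1 / cosh (2 * s)) (sqrt (tanh (2 * s))) f x"
proof -
  define p where "p = 1 / cosh (2 * s)"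
  define q where "q = sqrt (tanh (2 * s))"
  have q: "q > 0"
    unfolding q_def using s by simp
  have "Uop s f x = (\<integral>z. Ukernel s x z * f z \<partial>lborel)"
    using s by (simp add: Uop_def)
  also have "\<dots> = \<bar>q\<bar> *\<^sub>R (\<integral>u. Ukernel s x (p * x + q * u) * f (p * x + q * u) \<partial>lborel)"
    using q by (intro lborel_integral_real_affine) simp
  also have "\<dots> = (\<integral>u. q * Ukernel s x (p * x + q * u) * f (p * x + q * u) \<partial>lborel)"
    using q by (simp add: mult.assoc)
  also have "\<dots> = (\<integral>u. cosh (2 * s) powr (-1/2) * exp (- (tanh (2 * s) * x\<^sup>2 / 2)) *
      (std_normal_density u * f (p * x + q * u)) \<partial>lborel)"
    using Ukernel_substitution[OF s, of x] unfolding p_def q_def by (simp add: mult_ac)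
  finally show ?thesis
    unfolding gauss_smooth_def p_def q_def by simp
qed

definition gauss_exponent :: "real \<Rightarrow> nat \<Rightarrow> real \<Rightarrow> real" where
  "gauss_exponent a j x =
     (if j = 0 then - (a * x\<^sup>2 / 2) else if j = 1 then - (a * x) else if j = 2 then - a else 0)"

lemma deriv_chain_gauss_exponent: "deriv_chain N (gauss_exponent a)"
proof -
  have "(gauss_exponent a j has_real_derivative gauss_exponent a (Suc j) x) (at x)" for j x
  proof -
    consider "j = 0" | "j = 1" | "j = 2" | "j > 2"
      by linarith
    then show ?thesis
    proof cases
      case 1
      have "((\<lambda>x. - (a * x\<^sup>2 / 2)) has_real_derivative - (a * x)) (at x)"
        by (auto intro!: derivative_eq_intros)
      with 1 show ?thesis
        by (simp add: gauss_exponent_def[abs_def])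
    next
      case 2
      have "((\<lambda>x. - (a * x)) has_real_derivative - a) (at x)"
        by (auto intro!: derivative_eq_intros)
      with 2 show ?thesis
        by (simp add: gauss_exponent_def[abs_def])
    qed (auto simp: gauss_exponent_def[abs_def])
  qed
  moreover have "gauss_exponent a N \<in> borel_measurable borel"
    unfolding gauss_exponent_def[abs_def] by measurable
  ultimately show ?thesis
    unfolding deriv_chain_def by blast
qed

lemma abs_gauss_exponent_le:
  assumes "0 \<le> a" "1 \<le> i"
  shows "\<bar>gauss_exponent a i x\<bar> \<le> a * exp \<bar>x\<bar>"
proof -
  have "\<bar>x\<bar> \<le> exp \<bar>x\<bar>"
    using exp_ge_add_one_self[of "\<bar>x\<bar>"] by linarith
  then have "a * \<bar>x\<bar> \<le> a * exp \<bar>x\<bar>" "a \<le> a * exp \<bar>x\<bar>"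
    using assms mult_left_mono[of 1 "exp \<bar>x\<bar>" a] by (auto intro!: mult_left_mono)
  then show ?thesis
    using assms by (auto simp: gauss_exponent_def abs_mult)
qed

definition diffusion_rate :: "nat \<Rightarrow> real" where
  "diffusion_rate N = 2 ^ Suc N * exp_chain_const 1 N + real N ^ 2 / 2"

lemma diffusion_rate_nonneg: "0 \<le> diffusion_rate N"
  unfolding diffusion_rate_def by (simp add: exp_chain_const_nonneg)

lemma derivs_cosh_bounded_Uop:
  assumes D: "derivs_cosh_bounded N B D" and s: "0 \<le> s"
  shows "\<exists>D'. derivs_cosh_bounded N (exp (diffusion_rate N * tanh (2 * s)) * B) D' \<and> D' 0 = Uop s (D 0)"
proof (cases "s = 0")
  case True
  with D show ?thesis
    by (auto simp: Uop_def[abs_def])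
next
  case False
  with s have s: "s > 0"
    by simp
  define a where "a = tanh (2 * s)"
  define p where "p = 1 / cosh (2 * s)"
  define r where "r = cosh (2 * s) powr (-1/2)"
  define F where "F j x = r * (p ^ j * gauss_smooth p (sqrt a) (D j) x)" for j x
  have a: "0 < a" "a \<le> 1"
    unfolding a_def using s tanh_real_lt_1[of "2 * s"] by auto
  have p: "0 < p" "p \<le> 1"
    unfolding p_def using cosh_real_ge_1[of "2 * s"] by auto
  have r: "0 \<le> r" "r \<le> 1"
    unfolding r_def powr_minus_half[OF cosh_real_pos] using cosh_real_ge_1[of "2 * s"] by auto
  have "derivs_cosh_bounded N (exp (real N ^ 2 * a / 2) * B) F"
    unfolding F_def using derivs_cosh_bounded_gauss_smooth[OF D p, of "sqrt a"] a r
    by (intro derivs_cosh_bounded_scale) auto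
  then have "derivs_cosh_bounded N (1 * exp (2 ^ Suc N * exp_chain_const 1 N * a) * (exp (real N ^ 2 * a / 2) * B))
      (leibniz (exp_chain (gauss_exponent a)) F)"
    using a abs_gauss_exponent_le[of a]
    by (intro derivs_cosh_bounded_exp_mult[OF _ deriv_chain_gauss_exponent]) (auto simp: gauss_exponent_def)
  moreover have "1 * exp (2 ^ Suc N * exp_chain_const 1 N * a) * (exp (real N ^ 2 * a / 2) * B)
      = exp (diffusion_rate N * a) * B"
    unfolding diffusion_rate_def by (simp add: algebra_simps flip: exp_add)
  moreover have "leibniz (exp_chain (gauss_exponent a)) F 0 = Uop s (D 0)"
    unfolding Uop_eq_gauss_smooth[OF s] F_def r_def p_def a_def by (simp add: gauss_exponent_def fun_eq_iff mult_ac)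
  ultimately show ?thesis
    unfolding a_def[symmetric] by metis
qed

section \<open>The potential step\<close>

definition potential_rate :: "nat \<Rightarrow> real \<Rightarrow> real \<Rightarrow> real" where
  "potential_rate N L H = 2 * L * (1 + 2 ^ Suc N * exp_chain_const (2 * H * L) N)"

lemma potential_rate_nonneg: "0 \<le> L \<Longrightarrow> 0 \<le> H \<Longrightarrow> 0 \<le> potential_rate N L H"
  unfolding potential_rate_def by (simp add: exp_chain_const_nonneg)

lemma derivs_cosh_bounded_exp_potential:
  assumes D: "derivs_cosh_bounded N B D" and w: "deriv_chain N w"
    and w_bound: "\<And>j x. j \<le> N \<Longrightarrow> \<bar>w j x\<bar> \<le> L" and h: "0 \<le> h" "h \<le> H"
  shows "\<exists>D'. derivs_cosh_bounded N (exp (potential_rate N L H * h) * B) D' \<and>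
    D' 0 = (\<lambda>x. exp (- 2 * w 0 x * h) * D 0 x)"
proof -
  define u where "u j x = - 2 * h * w j x" for j x
  have L: "0 \<le> L"
    using w_bound[of 0 0] by simp
  have u_le: "\<bar>u i x\<bar> \<le> 2 * h * L" if "i \<le> N" for i x
    unfolding u_def using h w_bound[OF that, of x] by (simp add: abs_mult mult_left_mono)
  have u_bound: "\<bar>u i x\<bar> \<le> 2 * h * L * exp \<bar>x\<bar>" if "i \<le> N" for i x
    using u_le[OF that, of x] mult_left_mono[of 1 "exp \<bar>x\<bar>" "2 * h * L"] h L by simp
  have M: "exp (u 0 x) \<le> exp (2 * h * L)" for x
    using u_le[of 0 x] by simp
  have u: "deriv_chain N u"
    unfolding u_def[abs_def] by (rule deriv_chain_scaleR[OF w])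
  have "derivs_cosh_bounded N (exp (2 * h * L) * exp (2 ^ Suc N * exp_chain_const (2 * H * L) N * (2 * h * L)) * B)
      (leibniz (exp_chain u) D)"
    using h L u_bound M
    by (intro derivs_cosh_bounded_exp_mult[OF D u]) (auto simp: mult_right_mono)
  moreover have "exp (2 * h * L) * exp (2 ^ Suc N * exp_chain_const (2 * H * L) N * (2 * h * L))
      = exp (potential_rate N L H * h)"
    unfolding potential_rate_def by (simp add: algebra_simps flip: exp_add)
  ultimately show ?thesis
    by (intro exI[of _ "leibniz (exp_chain u) D"]) (auto simp: u_def mult_ac)
qed

definition potential_bounded :: "nat \<Rightarrow> real \<Rightarrow> (real \<Rightarrow> real \<Rightarrow> real) \<Rightarrow> bool" where
  "potential_bounded N L c \<longleftrightarrow>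
     (\<forall>\<sigma>>0. deriv_chain N (\<lambda>j. (deriv ^^ j) (c \<sigma>)) \<and> (\<forall>j\<le>N. \<forall>x. \<bar>(deriv ^^ j) (c \<sigma>) x\<bar> \<le> L))"

lemma potential_bounded_nonneg: "potential_bounded N L c \<Longrightarrow> 0 \<le> L"
  unfolding potential_bounded_def by (metis abs_ge_zero order_trans zero_le zero_less_one)

lemma derivs_cosh_bounded_potential_step:
  assumes D: "derivs_cosh_bounded N B D" and c: "potential_bounded N L c"
    and \<sigma>: "\<sigma> > 0" and h: "0 \<le> h" "h \<le> H"
  shows "\<exists>D'. derivs_cosh_bounded N (exp (potential_rate N L H * h) * B) D' \<and>
    D' 0 = (\<lambda>x. exp (- 2 * c \<sigma> x * h) * D 0 x)"
proof -
  have "deriv_chain N (\<lambda>j. (deriv ^^ j) (c \<sigma>))" "\<And>j x. j \<le> N \<Longrightarrow> \<bar>(deriv ^^ j) (c \<sigma>) x\<bar> \<le> L"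
    using c \<sigma> unfolding potential_bounded_def by auto
  from derivs_cosh_bounded_exp_potential[OF D this h] show ?thesis
    by simp
qed

section \<open>The splitting scheme\<close>

lemma gtau_Suc_diff: "gtau t n (Suc m) - gtau t n m = t / (2 * real n)"
  unfolding gtau_def by (simp add: algebra_simps add_divide_distrib)

definition splitting_rate :: "nat \<Rightarrow> real \<Rightarrow> real \<Rightarrow> real" where
  "splitting_rate N L t = 4 * t * diffusion_rate N + t * potential_rate N L t / 2"

lemma splitting_rate_nonneg: "0 \<le> L \<Longrightarrow> 0 \<le> t \<Longrightarrow> 0 \<le> splitting_rate N L t"
  unfolding splitting_rate_def using diffusion_rate_nonneg potential_rate_nonneg by simp

lemma node_derivs_cosh_bounded:
  assumes v0: "derivs_cosh_bounded N B0 D0" "D0 0 = v0" and c: "potential_bounded N L c"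
    and t: "0 < t"
  shows "k \<le> n \<Longrightarrow>
    \<exists>D. derivs_cosh_bounded N (B0 * exp (real k * splitting_rate N L t / real n)) D \<and> D 0 = node t n c v0 k"
proof (induction k)
  case 0
  with v0 show ?case
    by auto
next
  case (Suc k)
  then obtain D where D: "derivs_cosh_bounded N (B0 * exp (real k * splitting_rate N L t / real n)) D"
    "D 0 = node t n c v0 k"
    by auto
  have n: "real n > 0"
    using Suc.prems by simp
  define s where "s = 2 * (gtau t n (2 * k + 1) - gtau t n (2 * k))"
  define h where "h = gtau t n (2 * k + 2) - gtau t n (2 * k + 1)"
  have s: "s = t / real n" and h: "h = t / (2 * real n)"
    unfolding s_def h_def using gtau_Suc_diff[of t n "2 * k"] gtau_Suc_diff[of t n "Suc (2 * k)"] by simp_all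
  have \<sigma>: "gtau t n (2 * k + 2) > 0"
    unfolding gtau_def using t n by simp
  have h_le: "0 \<le> h" "h \<le> t"
    unfolding h using t n by (auto simp: field_simps)
  obtain D1 where D1: "derivs_cosh_bounded N (exp (diffusion_rate N * tanh (2 * s)) *
      (B0 * exp (real k * splitting_rate N L t / real n))) D1" "D1 0 = Uop s (node t n c v0 k)"
    using derivs_cosh_bounded_Uop[OF D(1), of s] D(2) t n unfolding s by auto
  obtain D2 where D2: "derivs_cosh_bounded N (exp (potential_rate N L t * h) *
      (exp (diffusion_rate N * tanh (2 * s)) * (B0 * exp (real k * splitting_rate N L t / real n)))) D2"
    "D2 0 = (\<lambda>x. exp (- 2 * c (gtau t n (2 * k + 2)) x * h) * D1 0 x)"
    using derivs_cosh_bounded_potential_step[OF D1(1) c \<sigma> h_le] by blast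
  have "D2 0 = node t n c v0 (Suc k)"
    unfolding D2(2) D1(2) by (simp add: s_def h_def)
  moreover have "exp (potential_rate N L t * h) *
      (exp (diffusion_rate N * tanh (2 * s)) * (B0 * exp (real k * splitting_rate N L t / real n)))
    \<le> B0 * exp (real (Suc k) * splitting_rate N L t / real n)"
  proof -
    have "diffusion_rate N * tanh (2 * s) \<le> diffusion_rate N * (4 * s)"
      using tanh_le_two_mult[of "2 * s"] s t n diffusion_rate_nonneg by (intro mult_left_mono) auto
    moreover have "real (Suc k) * splitting_rate N L t / real n
        = real k * splitting_rate N L t / real n + diffusion_rate N * (4 * s) + potential_rate N L t * h"
      unfolding splitting_rate_def s h using n by (simp add: field_simps)
    ultimately have "potential_rate N L t * h + diffusion_rate N * tanh (2 * s) + real k * splitting_rate N L t / real n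
        \<le> real (Suc k) * splitting_rate N L t / real n"
      by linarith
    then show ?thesis
      using derivs_cosh_bounded_nonneg[OF v0(1)] by (simp add: mult_left_mono mult_ac flip: exp_add)
  qed
  ultimately show ?case
    using derivs_cosh_bounded_mono[OF D2(1)] by blast
qed

lemma Uop_node_derivs_cosh_bounded:
  assumes v0: "derivs_cosh_bounded N B0 D0" "D0 0 = v0" and c: "potential_bounded N L c"
    and t: "0 < t" and n: "1 \<le> n" and k: "k \<le> n" and s: "0 \<le> s"
  shows "\<exists>D. derivs_cosh_bounded N (exp (diffusion_rate N) * (B0 * exp (splitting_rate N L t))) D \<and>
    D 0 = Uop s (node t n c v0 k)"
proof -
  have B0: "0 \<le> B0"
    by (rule derivs_cosh_bounded_nonneg[OF v0(1)])
  obtain D where D: "derivs_cosh_bounded N (B0 * exp (real k * splitting_rate N L t / real n)) D"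
    "D 0 = node t n c v0 k"
    using node_derivs_cosh_bounded[OF v0 c t k] by blast
  have "real k * splitting_rate N L t \<le> real n * splitting_rate N L t"
    using k splitting_rate_nonneg[OF potential_bounded_nonneg[OF c], of t N] t by (intro mult_right_mono) auto
  then have "B0 * exp (real k * splitting_rate N L t / real n) \<le> B0 * exp (splitting_rate N L t)"
    using n B0 by (auto simp: divide_le_eq mult.commute intro!: mult_left_mono)
  with D(1) have "derivs_cosh_bounded N (B0 * exp (splitting_rate N L t)) D"
    by (rule derivs_cosh_bounded_mono)
  then obtain D' where D': "derivs_cosh_bounded N (exp (diffusion_rate N * tanh (2 * s)) * (B0 * exp (splitting_rate N L t))) D'"
    "D' 0 = Uop s (node t n c v0 k)"
    using derivs_cosh_bounded_Uop[OF _ s] D(2) by metis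
  have "exp (diffusion_rate N * tanh (2 * s)) \<le> exp (diffusion_rate N)"
    using tanh_real_lt_1[of "2 * s"] diffusion_rate_nonneg[of N] by (simp add: mult_left_le)
  then have "exp (diffusion_rate N * tanh (2 * s)) * (B0 * exp (splitting_rate N L t))
      \<le> exp (diffusion_rate N) * (B0 * exp (splitting_rate N L t))"
    using B0 by (intro mult_right_mono) auto
  with D' show ?thesis
    using derivs_cosh_bounded_mono by blast
qed

lemma vn_cases:
  assumes t: "0 < t" and n: "1 \<le> n" and \<tau>: "0 \<le> \<tau>"
  obtains (diffusion) k where "k < n" "gtau t n (2 * k) \<le> \<tau>"
      "vn t n c g \<tau> = Uop (2 * (\<tau> - gtau t n (2 * k))) (node t n c g k)"
    | (potential) k where "k < n" "gtau t n (2 * k + 1) \<le> \<tau>"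
      "vn t n c g \<tau> = (\<lambda>x. exp (- 2 * c (gtau t n (2 * k + 2)) x * (\<tau> - gtau t n (2 * k + 1))) *
        Uop (t / real n) (node t n c g k) x)"
proof -
  define m where "m = min (2 * n - 1) (nat \<lfloor>\<tau> / (t / (2 * real n))\<rfloor>)"
  have "real m \<le> real (nat \<lfloor>\<tau> / (t / (2 * real n))\<rfloor>)"
    unfolding m_def by simp
  also have "\<dots> \<le> \<tau> / (t / (2 * real n))"
    using \<tau> t by simp
  finally have "gtau t n m \<le> \<tau>"
    unfolding gtau_def using t n by (simp add: field_simps)
  moreover have "m div 2 < n"
    unfolding m_def using n by auto
  moreover have "2 * (gtau t n (2 * (m div 2) + 1) - gtau t n (2 * (m div 2))) = t / real n"
    using gtau_Suc_diff[of t n "2 * (m div 2)"] by simp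
  moreover have "vn t n c g \<tau> = (if even m then Uop (2 * (\<tau> - gtau t n (2 * (m div 2)))) (node t n c g (m div 2))
      else (\<lambda>x. exp (- 2 * c (gtau t n (2 * (m div 2) + 2)) x * (\<tau> - gtau t n (2 * (m div 2) + 1))) *
        Uop (2 * (gtau t n (2 * (m div 2) + 1) - gtau t n (2 * (m div 2)))) (node t n c g (m div 2)) x))"
    by (auto simp: vn_def[abs_def] Let_def m_def intro!: ext)
  ultimately show ?thesis
    using that by (cases "even m") (auto elim!: evenE oddE)
qed

lemma vn_derivs_cosh_bounded:
  assumes v0: "derivs_cosh_bounded N B0 D0" "D0 0 = v0" and c: "potential_bounded N L c"
    and t: "0 < t" and n: "1 \<le> n" and \<tau>: "0 \<le> \<tau>" "\<tau> \<le> t"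
  shows "\<exists>D. derivs_cosh_bounded N
    (B0 * exp (splitting_rate N L t + diffusion_rate N + potential_rate N L t * t)) D \<and> D 0 = vn t n c v0 \<tau>"
proof -
  let ?B = "exp (diffusion_rate N) * (B0 * exp (splitting_rate N L t))"
  have B_le: "exp (potential_rate N L t * h) * ?B
      \<le> B0 * exp (splitting_rate N L t + diffusion_rate N + potential_rate N L t * t)" if "h \<le> t" for h
  proof -
    have "potential_rate N L t * h \<le> potential_rate N L t * t"
      using that potential_rate_nonneg[OF potential_bounded_nonneg[OF c], of t N] t by (intro mult_left_mono) auto
    then show ?thesis
      using derivs_cosh_bounded_nonneg[OF v0(1)] by (simp add: mult_left_mono mult_ac flip: exp_add)
  qed
  from t n \<tau>(1) show ?thesis
  proof (cases rule: vn_cases[where c = c and g = v0])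
    case (diffusion k)
    then obtain D where "derivs_cosh_bounded N ?B D" "D 0 = vn t n c v0 \<tau>"
      using Uop_node_derivs_cosh_bounded[OF v0 c t n, of k "2 * (\<tau> - gtau t n (2 * k))"] by auto
    with B_le[of 0] t show ?thesis
      using derivs_cosh_bounded_mono by fastforce
  next
    case (potential k)
    define h where "h = \<tau> - gtau t n (2 * k + 1)"
    have "0 \<le> gtau t n (2 * k + 1)"
      unfolding gtau_def using t by simp
    then have h: "0 \<le> h" "h \<le> t"
      unfolding h_def using potential(2) \<tau> by auto
    have \<sigma>: "gtau t n (2 * k + 2) > 0"
      unfolding gtau_def using t n by simp
    obtain D1 where D1: "derivs_cosh_bounded N ?B D1" "D1 0 = Uop (t / real n) (node t n c v0 k)"
      using Uop_node_derivs_cosh_bounded[OF v0 c t n, of k "t / real n"] potential(1) t by auto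
    obtain D2 where D2: "derivs_cosh_bounded N (exp (potential_rate N L t * h) * ?B) D2"
      "D2 0 = (\<lambda>x. exp (- 2 * c (gtau t n (2 * k + 2)) x * h) * D1 0 x)"
      using derivs_cosh_bounded_potential_step[OF D1(1) c \<sigma> h] by blast
    have "D2 0 = vn t n c v0 \<tau>"
      unfolding potential(3) D2(2) D1(2) h_def ..
    with derivs_cosh_bounded_mono[OF D2(1) B_le[OF h(2)]] show ?thesis
      by blast
  qed
qed

lemma abs_funpow_deriv_vn_le:
  assumes v0: "derivs_cosh_bounded N B0 D0" "D0 0 = v0" and c: "potential_bounded N L c"
    and t: "0 < t" and n: "1 \<le> n" and \<tau>: "\<tau> \<in> {0..t}" and j: "j \<le> N"
  shows "\<bar>(deriv ^^ j) (vn t n c v0 \<tau>) x\<bar>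
    \<le> B0 * exp (splitting_rate N L t + diffusion_rate N + potential_rate N L t * t) * cosh (real N * x)"
proof -
  obtain D where "derivs_cosh_bounded N
      (B0 * exp (splitting_rate N L t + diffusion_rate N + potential_rate N L t * t)) D" "D 0 = vn t n c v0 \<tau>"
    using vn_derivs_cosh_bounded[OF v0 c t n] \<tau> by auto
  with abs_funpow_deriv_le[OF _ j] show ?thesis
    by metis
qed

lemma grid_interval_subset:
  assumes "k < n" "0 < t"
  shows "{real k * t / real n .. real (Suc k) * t / real n} \<subseteq> {0..t}"
proof -
  have "real (Suc k) * t \<le> real n * t"
    using assms by (intro mult_right_mono) auto
  then have "real (Suc k) * t / real n \<le> t"
    using assms by (simp add: pos_divide_le_eq mult.commute)
  then show ?thesis
    using assms by auto
qed

lemma uniform_bound_of_bounded_family: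
  fixes g :: "nat \<Rightarrow> 'a \<Rightarrow> real"
  assumes "\<And>j. j \<le> N \<Longrightarrow> bounded (g j ` S)"
  obtains B where "0 \<le> B" "\<And>j x. j \<le> N \<Longrightarrow> x \<in> S \<Longrightarrow> \<bar>g j x\<bar> \<le> B"
proof -
  have "bounded (\<Union>j\<le>N. g j ` S)"
    using assms by (intro bounded_UN) auto
  then obtain B where B: "\<forall>y\<in>(\<Union>j\<le>N. g j ` S). norm y \<le> B"
    unfolding bounded_iff by blast
  have "\<bar>g j x\<bar> \<le> max 0 B" if "j \<le> N" "x \<in> S" for j x
    using B that by (metis UN_I atMost_iff imageI max.coboundedI2 real_norm_def)
  then show ?thesis
    by (intro that[of "max 0 B"]) auto
qed

lemma derivs_cosh_bounded_funpow_deriv: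
  assumes diff: "\<And>j x. j < N \<Longrightarrow> (deriv ^^ j) f differentiable (at x)"
    and cont: "continuous_on UNIV ((deriv ^^ N) f)"
    and bdd: "\<And>j. j \<le> N \<Longrightarrow> bounded (range ((deriv ^^ j) f))"
  obtains B where "derivs_cosh_bounded N B (\<lambda>j. (deriv ^^ j) f)"
proof -
  obtain B where B: "0 \<le> B" "\<And>j x. j \<le> N \<Longrightarrow> x \<in> UNIV \<Longrightarrow> \<bar>(deriv ^^ j) f x\<bar> \<le> B"
    using uniform_bound_of_bounded_family[of N "\<lambda>j. (deriv ^^ j) f" UNIV, OF bdd] by metis
  have "\<bar>(deriv ^^ j) f x\<bar> \<le> B * cosh (real j * x)" if "j \<le> N" for j x
    using B(2)[OF that UNIV_I, of x] mult_left_mono[OF cosh_real_ge_1 B(1), of "real j * x"] by linarith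
  moreover have "deriv_chain N (\<lambda>j. (deriv ^^ j) f)"
    by (rule deriv_chain_funpow_deriv[OF diff borel_measurable_continuous_onI[OF cont]])
  ultimately show ?thesis
    using that unfolding derivs_cosh_bounded_def by blast
qed

lemma potential_bounded_funpow_deriv:
  fixes c :: "real \<Rightarrow> real \<Rightarrow> real"
  assumes diff: "\<And>j s y. j < N \<Longrightarrow> s > 0 \<Longrightarrow> ((deriv ^^ j) (c s)) differentiable (at y)"
    and cont: "continuous_on ({0<..} \<times> UNIV) (\<lambda>(s, y). (deriv ^^ N) (c s) y)"
    and bdd: "\<And>j. j \<le> N \<Longrightarrow> bounded ((\<lambda>(s, y). (deriv ^^ j) (c s) y) ` ({0<..} \<times> UNIV))"
  obtains L where "potential_bounded N L c"
proof -
  obtain L where L: "0 \<le> L"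
    "\<And>j p. j \<le> N \<Longrightarrow> p \<in> {0<..} \<times> UNIV \<Longrightarrow> \<bar>(\<lambda>(s, y). (deriv ^^ j) (c s) y) p\<bar> \<le> L"
    using uniform_bound_of_bounded_family[of N "\<lambda>j (s, y). (deriv ^^ j) (c s) y", OF bdd] by metis
  have "\<bar>(deriv ^^ j) (c \<sigma>) x\<bar> \<le> L" if "\<sigma> > 0" "j \<le> N" for \<sigma> j x
    using L(2)[of j "(\<sigma>, x)"] that by simp
  moreover have "deriv_chain N (\<lambda>j. (deriv ^^ j) (c \<sigma>))" if \<sigma>: "\<sigma> > 0" for \<sigma>
  proof (rule deriv_chain_funpow_deriv[OF diff[OF _ \<sigma>] borel_measurable_continuous_onI])
    have "continuous_on UNIV (\<lambda>y. (\<sigma>, y))" "(\<lambda>y. (\<sigma>, y)) ` UNIV \<subseteq> {0<..} \<times> UNIV"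
      using \<sigma> by (auto intro!: continuous_intros)
    from continuous_on_compose2[OF cont this] show "continuous_on UNIV ((deriv ^^ N) (c \<sigma>))"
      by simp
  qed
  ultimately show ?thesis
    using that unfolding potential_bounded_def by blast
qed

theorem lemma3:
  fixes v0 :: "real \<Rightarrow> real" and c :: "real \<Rightarrow> real \<Rightarrow> real" and t :: real
  assumes v0_diff: "\<And>j x. j < 4 \<Longrightarrow> ((deriv ^^ j) v0) differentiable (at x)"
    and v0_cont: "\<And>j. j \<le> 4 \<Longrightarrow> continuous_on UNIV ((deriv ^^ j) v0)"
    and v0_bdd: "\<And>j. j \<le> 4 \<Longrightarrow> bounded (range ((deriv ^^ j) v0))"
    and v0_lim: "(v0 \<longlongrightarrow> 0) at_infinity"
    and c_cont: "continuous_on ({0..} \<times> UNIV) (\<lambda>(s, y). c s y)"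
    and c_bdd: "bounded ((\<lambda>(s, y). c s y) ` ({0..} \<times> UNIV))"
    and c_C1: "\<exists>D. (\<forall>p \<in> {0<..} \<times> UNIV. ((\<lambda>(s, y). c s y) has_derivative D p) (at p))
                 \<and> continuous_on ({0<..} \<times> UNIV) (\<lambda>p. D p (1, 0))
                 \<and> continuous_on ({0<..} \<times> UNIV) (\<lambda>p. D p (0, 1))"
    and c_xdiff: "\<And>j s y. j < 4 \<Longrightarrow> s > 0 \<Longrightarrow> ((deriv ^^ j) (c s)) differentiable (at y)"
    and c_xcont: "\<And>j. j \<le> 4 \<Longrightarrow>
                   continuous_on ({0<..} \<times> UNIV) (\<lambda>(s, y). (deriv ^^ j) (c s) y)"
    and c_xbdd: "\<And>j. j \<le> 4 \<Longrightarrow>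
                   bounded ((\<lambda>(s, y). (deriv ^^ j) (c s) y) ` ({0<..} \<times> UNIV))"
    and t_pos: "t > 0"
  shows "\<forall>x. \<exists>C > 0. \<forall>j \<le> 4. \<forall>n \<ge> 1. \<forall>k < n.
           \<forall>\<tau> \<in> {real k * t / real n .. real (Suc k) * t / real n}.
             \<bar>(deriv ^^ j) (vn t n c v0 \<tau>) x\<bar> \<le> C"
proof (intro allI)
  fix x
  obtain B0 where v0: "derivs_cosh_bounded 4 B0 (\<lambda>j. (deriv ^^ j) v0)"
    using derivs_cosh_bounded_funpow_deriv[OF v0_diff v0_cont v0_bdd] by auto
  obtain L where c: "potential_bounded 4 L c"
    using potential_bounded_funpow_deriv[OF c_xdiff c_xcont c_xbdd] by auto
  define C where "C = B0 * exp (splitting_rate 4 L t + diffusion_rate 4 + potential_rate 4 L t * t) * cosh (4 * x) + 1"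
  have "0 < C"
    unfolding C_def using derivs_cosh_bounded_nonneg[OF v0] cosh_real_pos[of "4 * x"]
    by (intro add_nonneg_pos mult_nonneg_nonneg) auto
  moreover have "\<bar>(deriv ^^ j) (vn t n c v0 \<tau>) x\<bar> \<le> C"
    if "j \<le> 4" "1 \<le> n" "k < n" "\<tau> \<in> {real k * t / real n .. real (Suc k) * t / real n}" for j n k \<tau>
  proof -
    have "\<tau> \<in> {0..t}"
      using grid_interval_subset[OF that(3) t_pos] that(4) by blast
    from abs_funpow_deriv_vn_le[OF v0 refl c t_pos that(2) this that(1), of x] show ?thesis
      unfolding C_def by simp
  qed
  ultimately show "\<exists>C > 0. \<forall>j \<le> 4. \<forall>n \<ge> 1. \<forall>k < n.
      \<forall>\<tau> \<in> {real k * t / real n .. real (Suc k) * t / real n}. \<bar>(deriv ^^ j) (vn t n c v0 \<tau>) x\<bar> \<le> C"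
    by blast
qed

end
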